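(* Let $\gamma\ge0$ and $g$ be integers with $g$ sufficiently large relative to $\gamma$, and fix a set ${\rm S}_0$ arising as the residue-zero part of some semigroup in ${\rm H}(g,\gamma)$. Let $u_1, u_1'$ be integers, let ${\rm S}\in{\rm H}_{u_1}$ be such that $\#{\rm S}_{(u_1)_3}$ is maximal among all members of ${\rm H}_{u_1}$, and let ${\rm T}\in{\rm H}_{u_1'}$ be such that $\#{\rm T}_{(u_1')_3}$ is maximal among all members of ${\rm H}_{u_1'}$. If $\chi := u_1 - u_1^H < 6\gamma$ and ${\rm S}_{(u_1)_3} \subsetneq {\rm T}_{(u_1')_3}$, then $\widetilde{I}_{\rm T} < \widetilde{I}_{\rm S}$.
   Context: A numerical semigroup is a submonoid of $\mathbb{N}$ with finite complement; its genus is the size of the complement. For an integer $u$, $(u)_3$ is its residue mod 3 in $\{0,1,2\}$. For a semigroup ${\rm S}$ of genus $g$, ${\rm S}^*={\rm S}\cap\{1,\dots,2g\}$, ${\rm S}_i=\{s\in{\rm S}^*:(s)_3=i\}$, and the inflection is $\widetilde{I}_{\rm S}=\sum_{s\in{\rm S}^*}s$. A numerical semigroup is $(3,\gamma)$-hyperelliptic if its first $\gamma$ positive elements are multiples of 3 with the $\gamma$-th equal to $6\gamma$, and $3(2\gamma+1)$ belongs to it. ${\rm H}={\rm H}(g,\gamma)$ is the set of $(3,\gamma)$-hyperelliptic semigroups of genus $g$; $u_1({\rm T}) := \min\{t\in{\rm T}:(t)_3\ne0\}$; $u_1^H:=\min\{u_1({\rm T}):{\rm T}\in{\rm H}\}$.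 For the fixed set ${\rm S}_0$, ${\rm H}^{{\rm S}_0} := \{{\rm T}\in{\rm H} : {\rm T}_0={\rm S}_0\}$ and, for an integer $u$, ${\rm H}_{u} := \{{\rm T}\in{\rm H}^{{\rm S}_0} : u_1({\rm T}) = u\}$. *)

theory Defs
  imports Main
begin

definition numerical_semigroup :: "nat set \<Rightarrow> bool" where
  "numerical_semigroup S \<longleftrightarrow> 0 \<in> S \<and> (\<forall>a\<in>S. \<forall>b\<in>S. a + b \<in> S) \<and> finite (UNIV - S)"

definition genus :: "nat set \<Rightarrow> nat" where
  "genus S = card (UNIV - S)"

text \<open>(3,gamma)-hyperelliptic: the first gamma positive elements are multiples of 3,
  the gamma-th one equals 6 gamma, and 3(2 gamma + 1) belongs to S.  "The gamma-th positive
  element is 6 gamma" is expressed as: 6 gamma is in S and exactly gamma positive elements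
  of S are at most 6 gamma.\<close>
definition hyperelliptic3 :: "nat \<Rightarrow> nat set \<Rightarrow> bool" where
  "hyperelliptic3 \<gamma> S \<longleftrightarrow> numerical_semigroup S
     \<and> 6 * \<gamma> \<in> S
     \<and> card {s\<in>S. 0 < s \<and> s \<le> 6 * \<gamma>} = \<gamma>
     \<and> (\<forall>s\<in>S. 0 < s \<and> s \<le> 6 * \<gamma> \<longrightarrow> 3 dvd s)
     \<and> 3 * (2 * \<gamma> + 1) \<in> S"

definition HH :: "nat \<Rightarrow> nat \<Rightarrow> nat set set" where
  "HH g \<gamma> = {S. hyperelliptic3 \<gamma> S \<and> genus S = g}"

definition Sstar :: "nat set \<Rightarrow> nat set" where
  "Sstar S = {s\<in>S. 1 \<le> s \<and> s \<le> 2 * genus S}"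

definition Spart :: "nat set \<Rightarrow> nat \<Rightarrow> nat set" where
  "Spart S i = {s\<in>Sstar S. s mod 3 = i}"

definition inflection :: "nat set \<Rightarrow> nat" where
  "inflection S = (\<Sum>s\<in>Sstar S. s)"

definition u1 :: "nat set \<Rightarrow> nat" where
  "u1 T = (LEAST t. t \<in> T \<and> t mod 3 \<noteq> 0)"

definition u1H :: "nat \<Rightarrow> nat \<Rightarrow> nat" where
  "u1H g \<gamma> = Min (u1 ` HH g \<gamma>)"

definition HS0 :: "nat \<Rightarrow> nat \<Rightarrow> nat set \<Rightarrow> nat set set" where
  "HS0 g \<gamma> S0 = {T\<in>HH g \<gamma>. Spart T 0 = S0}"

definition Hu :: "nat \<Rightarrow> nat \<Rightarrow> nat set \<Rightarrow> nat \<Rightarrow> nat set set" where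
  "Hu g \<gamma> S0 u = {T\<in>HS0 g \<gamma> S0. u1 T = u}"

end

theory Submission
  imports Defs
begin

(* S and T have the same gaps in residue class 0.  For i = u mod 3, the strict inclusion
   S_i < T_i says that T has k >= 1 fewer gaps than S in class i, so T has k more gaps than S
   in the remaining class j.  In a (3,gamma)-hyperelliptic semigroup every residue class
   contains all numbers at least 12 gamma^2 above any of its elements, so the gaps of a class
   end within 12 gamma^2 of its least element.  An explicit semigroup with u1 about g shows
   u <= g + O(gamma); counting gaps then forces the least element m of S in class j to be
   about 2g.  Thus the extra gaps of T in class j lie above m, whereas the k gaps removed in
   class i lie below u + 12 gamma^2 and the O(gamma^2) gaps of S in class j missing from T lie
   below m + 12 gamma^2.  So T has the larger gap sum, and since the inflection plus the gap sum
   is 1 + 2 + ... + 2g, the inflection of T is the smaller one. *)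

lemma numerical_semigroup_zero: "numerical_semigroup S \<Longrightarrow> 0 \<in> S"
  unfolding numerical_semigroup_def by blast

lemma numerical_semigroup_add: "numerical_semigroup S \<Longrightarrow> a \<in> S \<Longrightarrow> b \<in> S \<Longrightarrow> a + b \<in> S"
  unfolding numerical_semigroup_def by blast

lemma numerical_semigroup_finite_gaps: "numerical_semigroup S \<Longrightarrow> finite (UNIV - S)"
  unfolding numerical_semigroup_def by blast

lemma numerical_semigroup_mult: "numerical_semigroup S \<Longrightarrow> a \<in> S \<Longrightarrow> k * a \<in> S"
  by (induction k) (simp_all add: numerical_semigroup_zero numerical_semigroup_add)

text \<open>The map \<open>k \<mapsto> n - k\<close> sends the elements of \<open>S\<close> below a gap \<open>n\<close> injectively to gaps.\<close>
lemma gap_less_double_genus: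
  assumes S: "numerical_semigroup S" and n: "n \<notin> S"
  shows "n < 2 * genus S"
proof -
  define A where "A = S \<inter> {..n}"
  define B where "B = (UNIV - S) \<inter> {..n}"
  have "(\<lambda>k. n - k) ` A \<subseteq> B"
    using n numerical_semigroup_add[OF S] unfolding A_def B_def by fastforce
  moreover have "inj_on (\<lambda>k. n - k) A"
    unfolding A_def by (auto simp: inj_on_def)
  ultimately have "card A \<le> card B"
    by (intro card_inj_on_le) (auto simp: B_def)
  moreover have "card B \<le> genus S"
    unfolding B_def genus_def by (intro card_mono numerical_semigroup_finite_gaps[OF S]) auto
  moreover have "card A + card B = Suc n"
  proof -
    have "card A + card B = card (A \<union> B)"
      by (rule card_Un_disjoint[symmetric]) (auto simp: A_def B_def)
    also have "A \<union> B = {..n}"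
      unfolding A_def B_def by auto
    finally show ?thesis by simp
  qed
  ultimately show ?thesis by linarith
qed

lemma gap_mem_atLeastAtMost:
  assumes S: "numerical_semigroup S" and n: "n \<notin> S"
  shows "n \<in> {1..2 * genus S}"
  using gap_less_double_genus[OF S n] numerical_semigroup_zero[OF S] n by (cases n) auto

lemma finite_HH: "finite (HH g \<gamma>)"
proof (rule finite_subset)
  show "HH g \<gamma> \<subseteq> (\<lambda>A. UNIV - A) ` Pow {..<2 * g}"
  proof
    fix S assume "S \<in> HH g \<gamma>"
    then have "numerical_semigroup S" "genus S = g"
      unfolding HH_def hyperelliptic3_def by auto
    then have "UNIV - S \<in> Pow {..<2 * g}"
      using gap_less_double_genus by auto
    then show "S \<in> (\<lambda>A. UNIV - A) ` Pow {..<2 * g}"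
      by (auto intro!: image_eqI[of _ _ "UNIV - S"])
  qed
qed simp

lemma inflection_plus_sum_gaps:
  assumes S: "numerical_semigroup S"
  shows "inflection S + (\<Sum>n\<in>UNIV - S. n) = (\<Sum>n = 1..2 * genus S. n)"
proof -
  have "UNIV - S \<subseteq> {1..2 * genus S}"
    using gap_mem_atLeastAtMost[OF S] by blast
  moreover have "Sstar S = {1..2 * genus S} - (UNIV - S)"
    unfolding Sstar_def by auto
  ultimately show ?thesis
    unfolding inflection_def by (simp add: sum.subset_diff[of "UNIV - S"])
qed

lemma hyperelliptic3_imp_numerical_semigroup: "hyperelliptic3 \<gamma> S \<Longrightarrow> numerical_semigroup S"
  unfolding hyperelliptic3_def by blast

text \<open>Every \<open>n \<ge> 4\<gamma>\<^sup>2\<close> is a nonnegative combination of the coprime numbers \<open>2\<gamma>\<close> and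
  \<open>2\<gamma> + 1\<close>, so \<open>3n\<close> is one of \<open>6\<gamma>\<close> and \<open>3(2\<gamma> + 1)\<close>.\<close>
lemma hyperelliptic3_triple_mem:
  assumes S: "hyperelliptic3 \<gamma> S" and n: "4 * \<gamma>\<^sup>2 \<le> n"
  shows "3 * n \<in> S"
proof -
  have ns: "numerical_semigroup S" and a: "6 * \<gamma> \<in> S" and b: "3 * (2 * \<gamma> + 1) \<in> S"
    using S unfolding hyperelliptic3_def by auto
  show ?thesis
  proof (cases "\<gamma> = 0")
    case True
    then show ?thesis
      using numerical_semigroup_mult[OF ns b, of n] by (simp add: mult.commute)
  next
    case False
    define q r where "q = n div (2 * \<gamma>)" and "r = n mod (2 * \<gamma>)"
    have "r < 2 * \<gamma>"
      using False by (simp add: r_def)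
    moreover have "2 * \<gamma> \<le> q"
      using div_le_mono[OF n, of "2 * \<gamma>"] False by (simp add: q_def power2_eq_square)
    ultimately have "3 * n = (q - r) * (6 * \<gamma>) + r * (3 * (2 * \<gamma> + 1))"
      using div_mult_mod_eq[of n "2 * \<gamma>"] unfolding q_def r_def
      by (simp add: algebra_simps diff_mult_distrib)
    then show ?thesis
      using numerical_semigroup_add[OF ns numerical_semigroup_mult[OF ns a] numerical_semigroup_mult[OF ns b]]
      by simp
  qed
qed

lemma hyperelliptic3_mem_if_cong:
  assumes S: "hyperelliptic3 \<gamma> S" and a: "a \<in> S"
    and cong: "n mod 3 = a mod 3" and le: "a + 12 * \<gamma>\<^sup>2 \<le> n"
  shows "n \<in> S"
proof -
  obtain t where t: "n - a = 3 * t"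
    using cong le by (metis le_add1 le_trans mod_eq_dvd_iff_nat dvdE)
  then have "3 * t \<in> S"
    using le by (intro hyperelliptic3_triple_mem[OF S]) linarith
  then have "a + (n - a) \<in> S"
    using t numerical_semigroup_add[OF hyperelliptic3_imp_numerical_semigroup[OF S] a] by simp
  then show ?thesis
    using le by simp
qed

definition gaps_in_class :: "nat set \<Rightarrow> nat \<Rightarrow> nat set" where
  "gaps_in_class S r = {n. n \<notin> S \<and> n mod 3 = r}"

definition least_in_class :: "nat set \<Rightarrow> nat \<Rightarrow> nat" where
  "least_in_class S r = (LEAST n. n \<in> S \<and> n mod 3 = r)"

lemma finite_gaps_in_class: "numerical_semigroup S \<Longrightarrow> finite (gaps_in_class S r)"
  unfolding gaps_in_class_def
  by (rule finite_subset[OF _ numerical_semigroup_finite_gaps]) auto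

lemma sum_gaps_by_class:
  assumes S: "numerical_semigroup S" and i: "i \<in> {1, 2}"
  shows "(\<Sum>n\<in>UNIV - S. f n) = (\<Sum>n\<in>gaps_in_class S 0. f n)
    + (\<Sum>n\<in>gaps_in_class S i. f n) + (\<Sum>n\<in>gaps_in_class S (3 - i). f n)"
proof -
  have "(\<lambda>n. n mod 3) ` (UNIV - S) \<subseteq> {..<3}"
    by auto
  from sum.group[OF numerical_semigroup_finite_gaps[OF S] finite_lessThan this, of f]
  have "(\<Sum>n\<in>UNIV - S. f n) = (\<Sum>r<3. \<Sum>n\<in>gaps_in_class S r. f n)"
    unfolding gaps_in_class_def by (simp add: set_diff_eq)
  also have "\<dots> = (\<Sum>n\<in>gaps_in_class S 0. f n)
    + (\<Sum>n\<in>gaps_in_class S i. f n) + (\<Sum>n\<in>gaps_in_class S (3 - i). f n)"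
    using i by (auto simp: numeral_3_eq_3 numeral_2_eq_2 lessThan_Suc ac_simps)
  finally show ?thesis .
qed

lemma genus_eq_card_gaps_in_class:
  assumes "numerical_semigroup S" and "i \<in> {1, 2}"
  shows "genus S = card (gaps_in_class S 0) + card (gaps_in_class S i)
    + card (gaps_in_class S (3 - i))"
  using sum_gaps_by_class[OF assms, of "\<lambda>_. 1::nat"] by (simp add: genus_def)

lemma gaps_in_class_eq_Spart:
  assumes "numerical_semigroup S"
  shows "gaps_in_class S r = {n \<in> {1..2 * genus S}. n mod 3 = r} - Spart S r"
  using gap_mem_atLeastAtMost[OF assms] unfolding gaps_in_class_def Spart_def Sstar_def by auto

lemma least_in_class_mem:
  assumes S: "numerical_semigroup S" and r: "r < 3"
  shows "least_in_class S r \<in> S" "least_in_class S r mod 3 = r"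
proof -
  have "\<not> 3 * (2 * genus S) + r < 2 * genus S"
    by simp
  then have "3 * (2 * genus S) + r \<in> S"
    using gap_less_double_genus[OF S] by blast
  moreover have "(3 * (2 * genus S) + r) mod 3 = r"
    using r by presburger
  ultimately have "least_in_class S r \<in> S \<and> least_in_class S r mod 3 = r"
    unfolding least_in_class_def by (rule LeastI[where P = "\<lambda>n. n \<in> S \<and> n mod 3 = r", OF conjI])
  then show "least_in_class S r \<in> S" "least_in_class S r mod 3 = r"
    by auto
qed

lemma least_in_class_le: "n \<in> S \<Longrightarrow> least_in_class S (n mod 3) \<le> n"
  unfolding least_in_class_def by (simp add: Least_le)

lemma u1_mem:
  assumes S: "numerical_semigroup S"
  shows "u1 S \<in> S" "u1 S mod 3 \<noteq> 0"
proof -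
  have "least_in_class S 1 \<in> S \<and> least_in_class S 1 mod 3 \<noteq> 0"
    using least_in_class_mem[OF S, of 1] by simp
  then have "u1 S \<in> S \<and> u1 S mod 3 \<noteq> 0"
    unfolding u1_def by (rule LeastI)
  then show "u1 S \<in> S" "u1 S mod 3 \<noteq> 0"
    by auto
qed

lemma card_residue_class_below_le: "card {n::nat. n < L \<and> n mod 3 = r} \<le> L div 3 + 1"
proof -
  have "inj_on (\<lambda>n. n div 3) {n::nat. n < L \<and> n mod 3 = r}"
    by (auto simp: inj_on_def) (metis div_mult_mod_eq)
  moreover have "(\<lambda>n. n div 3) ` {n::nat. n < L \<and> n mod 3 = r} \<subseteq> {..L div 3}"
    by (auto intro: div_le_mono)
  ultimately show ?thesis
    using card_inj_on_le[of "\<lambda>n. n div 3" _ "{..L div 3}"] by simp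
qed

lemma card_residue_class_below_ge:
  assumes "L mod 3 = r"
  shows "L div 3 \<le> card {n::nat. n < L \<and> n mod 3 = r}"
proof -
  have "(\<lambda>t. 3 * t + r) ` {..<L div 3} \<subseteq> {n. n < L \<and> n mod 3 = r}"
    using assms div_mult_mod_eq[of L 3] by auto
  moreover have "inj_on (\<lambda>t. 3 * t + r) {..<L div 3}"
    by (auto simp: inj_on_def)
  ultimately show ?thesis
    using card_inj_on_le[of "\<lambda>t. 3 * t + r" "{..<L div 3}"] by simp
qed

lemma card_gaps_in_class_ge:
  assumes S: "numerical_semigroup S" and r: "r < 3"
  shows "least_in_class S r div 3 \<le> card (gaps_in_class S r)"
proof -
  have "{n. n < least_in_class S r \<and> n mod 3 = r} \<subseteq> gaps_in_class S r"
    unfolding gaps_in_class_def using least_in_class_le by fastforce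
  then show ?thesis
    using card_residue_class_below_ge[OF least_in_class_mem(2)[OF S r]]
      card_mono[OF finite_gaps_in_class[OF S]] by (meson le_trans)
qed

lemma gaps_in_class_less:
  "hyperelliptic3 \<gamma> S \<Longrightarrow> a \<in> S \<Longrightarrow> n \<in> gaps_in_class S (a mod 3) \<Longrightarrow> n < a + 12 * \<gamma>\<^sup>2"
  unfolding gaps_in_class_def using hyperelliptic3_mem_if_cong by fastforce

lemma card_gaps_in_class_le:
  assumes S: "hyperelliptic3 \<gamma> S" and a: "a \<in> S"
  shows "card (gaps_in_class S (a mod 3)) \<le> (a + 12 * \<gamma>\<^sup>2) div 3 + 1"
proof -
  have "gaps_in_class S (a mod 3) \<subseteq> {n. n < a + 12 * \<gamma>\<^sup>2 \<and> n mod 3 = a mod 3}"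
    using gaps_in_class_less[OF S a] unfolding gaps_in_class_def by auto
  then have "card (gaps_in_class S (a mod 3)) \<le> card {n. n < a + 12 * \<gamma>\<^sup>2 \<and> n mod 3 = a mod 3}"
    by (rule card_mono[rotated]) simp
  then show ?thesis
    using card_residue_class_below_le le_trans by blast
qed

lemma card_residue_class_below:
  assumes "(r::nat) < 3"
  shows "card {n. n < 3 * x + r \<and> n mod 3 = r} = x"
proof -
  have "{n. n < 3 * x + r \<and> n mod 3 = r} = (\<lambda>t. 3 * t + r) ` {..<x}"
  proof (intro set_eqI iffI)
    fix n assume "n \<in> {n. n < 3 * x + r \<and> n mod 3 = r}"
    then show "n \<in> (\<lambda>t. 3 * t + r) ` {..<x}"
      using div_mult_mod_eq[of n 3] by (intro image_eqI[of _ _ "n div 3"]) auto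
  qed (use assms in auto)
  then show ?thesis
    by (simp add: card_image inj_on_def)
qed

definition threshold_semigroup :: "nat \<Rightarrow> nat \<Rightarrow> nat \<Rightarrow> nat set" where
  "threshold_semigroup p x y = {n. n = 0 \<or> (n mod 3 = 0 \<and> 3 * p + 3 \<le> n)
     \<or> (n mod 3 = 1 \<and> 3 * x + 1 \<le> n) \<or> (n mod 3 = 2 \<and> 3 * y + 2 \<le> n)}"

lemma threshold_semigroup_numerical_semigroup:
  assumes "y \<le> 2 * x" "x \<le> 2 * y + 1" "p \<le> x + y"
  shows "numerical_semigroup (threshold_semigroup p x y)"
proof -
  have "UNIV - threshold_semigroup p x y \<subseteq> {..<3 * (p + x + y) + 3}"
    unfolding threshold_semigroup_def by auto
  moreover have "a + b \<in> threshold_semigroup p x y"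
    if "a \<in> threshold_semigroup p x y" "b \<in> threshold_semigroup p x y" for a b
  proof -
    have "(a + b) mod 3 = (a mod 3 + b mod 3) mod 3"
      by (simp add: mod_add_eq)
    with that assms show ?thesis
      unfolding threshold_semigroup_def by (elim CollectE disjE conjE) simp_all
  qed
  ultimately show ?thesis
    unfolding numerical_semigroup_def by (auto intro: finite_subset simp: threshold_semigroup_def)
qed

lemma gaps_in_class_threshold_semigroup:
  "gaps_in_class (threshold_semigroup p x y) 0 = {n. n < 3 * (p + 1) \<and> n mod 3 = 0} - {0}"
  "gaps_in_class (threshold_semigroup p x y) 1 = {n. n < 3 * x + 1 \<and> n mod 3 = 1}"
  "gaps_in_class (threshold_semigroup p x y) 2 = {n. n < 3 * y + 2 \<and> n mod 3 = 2}"
  unfolding gaps_in_class_def threshold_semigroup_def by auto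

lemma genus_threshold_semigroup:
  assumes "y \<le> 2 * x" "x \<le> 2 * y + 1" "p \<le> x + y"
  shows "genus (threshold_semigroup p x y) = p + x + y"
proof -
  let ?c = "\<lambda>r. card (gaps_in_class (threshold_semigroup p x y) r)"
  have "genus (threshold_semigroup p x y) = ?c 0 + ?c 1 + ?c 2"
    using genus_eq_card_gaps_in_class[OF threshold_semigroup_numerical_semigroup[OF assms], of 1]
    by simp
  also have "\<dots> = p + x + y"
    unfolding gaps_in_class_threshold_semigroup
    using card_residue_class_below[of 0 "p + 1"] card_residue_class_below[of 1 x]
      card_residue_class_below[of 2 y]
    by (simp add: card_Diff_singleton)
  finally show ?thesis .
qed

lemma hyperelliptic3_threshold_semigroup:
  assumes "y \<le> 2 * x" "x \<le> 2 * y + 1" "2 * \<gamma> \<le> x" "2 * \<gamma> \<le> y"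
  shows "hyperelliptic3 \<gamma> (threshold_semigroup \<gamma> x y)"
proof -
  have "{s \<in> threshold_semigroup \<gamma> x y. 0 < s \<and> s \<le> 6 * \<gamma>}
      = {n. n < 3 * (2 * \<gamma> + 1) \<and> n mod 3 = 0} - {n. n < 3 * (\<gamma> + 1) \<and> n mod 3 = 0}"
    using assms unfolding threshold_semigroup_def by auto
  then have "card {s \<in> threshold_semigroup \<gamma> x y. 0 < s \<and> s \<le> 6 * \<gamma>} = \<gamma>"
    using card_residue_class_below[of 0 "2 * \<gamma> + 1"] card_residue_class_below[of 0 "\<gamma> + 1"]
    by (simp add: card_Diff_subset subset_iff)
  then show ?thesis
    using threshold_semigroup_numerical_semigroup[of y x \<gamma>] assms
    unfolding hyperelliptic3_def by (auto simp: threshold_semigroup_def)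
qed

lemma u1_threshold_semigroup: "x \<le> y \<Longrightarrow> u1 (threshold_semigroup p x y) = 3 * x + 1"
  unfolding u1_def threshold_semigroup_def by (rule Least_equality) auto

text \<open>The witness has gaps \<open>3, \<dots>, 3\<gamma>\<close> in class 0 and splits the remaining \<open>g - \<gamma>\<close> gaps
  between the classes 1 and 2 in the ratio \<open>1 : 2\<close>, the most lopsided split closure allows.\<close>
lemma u1H_plus_gamma_le:
  assumes g: "7 * \<gamma> + 4 \<le> g"
  shows "u1H g \<gamma> + \<gamma> \<le> g + 3"
proof -
  define x where "x = (g - \<gamma> + 2) div 3"
  define y where "y = g - \<gamma> - x"
  have xy: "y \<le> 2 * x" "x \<le> y" "2 * \<gamma> \<le> x" and g_eq: "g = \<gamma> + x + y"
    using g unfolding x_def y_def by linarith+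
  then have "threshold_semigroup \<gamma> x y \<in> HH g \<gamma>"
    unfolding HH_def
    using hyperelliptic3_threshold_semigroup genus_threshold_semigroup[of y x \<gamma>] by auto
  then have "u1H g \<gamma> \<le> 3 * x + 1"
    unfolding u1H_def using finite_HH u1_threshold_semigroup[OF xy(2)]
    by (metis Min_le finite_imageI image_eqI)
  then show ?thesis
    using g unfolding x_def by linarith
qed

lemma sum_less_sum_of_card_excess:
  fixes D P Q :: "nat set"
  assumes fin: "finite D" "finite P" "finite Q"
    and card: "card P = card Q + card D" and nonempty: "D \<noteq> {}"
    and D_le: "\<forall>x\<in>D. x \<le> a" and Q_le: "\<forall>x\<in>Q. x \<le> b + c" and PQ_ge: "\<forall>x\<in>P - Q. b \<le> x"
    and QP: "card (Q - P) \<le> R" and big: "a + R * c < b"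
  shows "\<Sum>D + \<Sum>Q < \<Sum>P"
proof -
  define k r where "k = card D" and "r = card (Q - P)"
  have "1 \<le> k"
    using fin(1) nonempty by (simp add: k_def Suc_le_eq card_gt_0_iff)
  have card_PQ: "card (P - Q) = r + k"
    using card card_Int_Diff[OF fin(2), of Q] card_Int_Diff[OF fin(3), of P]
    by (simp add: k_def r_def Int_commute)
  have "\<Sum>D \<le> k * a"
    using sum_bounded_above[of D id a] D_le by (simp add: k_def)
  moreover have "\<Sum>(Q - P) \<le> r * b + r * c"
    using sum_bounded_above[of "Q - P" id "b + c"] Q_le by (simp add: r_def algebra_simps)
  moreover have "r * b + k * b \<le> \<Sum>(P - Q)"
    using sum_bounded_below[of "P - Q" b id] PQ_ge card_PQ by (simp add: algebra_simps)
  moreover have "k * a + r * c < k * b"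
  proof -
    have "r * c \<le> R * c"
      using QP by (simp add: r_def mult_le_mono1)
    also have "\<dots> \<le> k * (R * c)"
      using \<open>1 \<le> k\<close> by simp
    finally have "r * c \<le> k * (R * c)" .
    moreover have "k * (a + R * c) < k * b"
      using big \<open>1 \<le> k\<close> by simp
    ultimately show ?thesis
      using add_mult_distrib2[of k a "R * c"] by linarith
  qed
  moreover have "\<Sum>P = \<Sum>(P \<inter> Q) + \<Sum>(P - Q)" "\<Sum>Q = \<Sum>(P \<inter> Q) + \<Sum>(Q - P)"
    using sum.Int_Diff[OF fin(2), of id Q] sum.Int_Diff[OF fin(3), of id P]
    by (simp_all add: Int_commute)
  ultimately show ?thesis
    by linarith
qed
lemma card_gaps_in_class_diff_le:
  assumes S: "hyperelliptic3 \<gamma> S" and T: "hyperelliptic3 \<gamma> T" and j: "j < 3"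
    and less: "card (gaps_in_class S j) < card (gaps_in_class T j)"
  shows "card (gaps_in_class S j - gaps_in_class T j) \<le> 24 * \<gamma>\<^sup>2 + 2"
proof -
  have nsS: "numerical_semigroup S" and nsT: "numerical_semigroup T"
    using S T by (simp_all add: hyperelliptic3_imp_numerical_semigroup)
  define m mT where "m = least_in_class S j" and "mT = least_in_class T j"
  have m: "m \<in> S" "m mod 3 = j" and mT: "mT \<in> T" "mT mod 3 = j"
    using least_in_class_mem nsS nsT j by (simp_all add: m_def mT_def)
  have "m div 3 < (mT + 12 * \<gamma>\<^sup>2) div 3 + 1"
    using card_gaps_in_class_ge[OF nsS j] card_gaps_in_class_le[OF T mT(1)] less
    by (simp add: m_def mT)
  then have m_le: "m \<le> mT + 12 * \<gamma>\<^sup>2 + 2"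
    by linarith
  have "gaps_in_class S j - gaps_in_class T j \<subseteq> {mT..<m + 12 * \<gamma>\<^sup>2}"
  proof
    fix n assume n: "n \<in> gaps_in_class S j - gaps_in_class T j"
    then have "mT \<le> n"
      using least_in_class_le[of n T] unfolding gaps_in_class_def mT_def by auto
    moreover have "n < m + 12 * \<gamma>\<^sup>2"
      using gaps_in_class_less[OF S m(1)] n m(2) by blast
    ultimately show "n \<in> {mT..<m + 12 * \<gamma>\<^sup>2}"
      by simp
  qed
  then have "card (gaps_in_class S j - gaps_in_class T j) \<le> m + 12 * \<gamma>\<^sup>2 - mT"
    using card_mono[of "{mT..<m + 12 * \<gamma>\<^sup>2}"] by simp
  then show ?thesis
    using m_le by linarith
qed

lemma triple_genus_le_least_in_class:
  assumes S: "hyperelliptic3 \<gamma> S" and a: "a \<in> S" "a mod 3 \<in> {1, 2}"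
  shows "3 * genus S \<le> a + least_in_class S (3 - a mod 3) + 36 * \<gamma>\<^sup>2 + 9"
proof -
  have ns: "numerical_semigroup S"
    using S by (rule hyperelliptic3_imp_numerical_semigroup)
  define m where "m = least_in_class S (3 - a mod 3)"
  have m: "m \<in> S" "m mod 3 = 3 - a mod 3"
    using least_in_class_mem[OF ns, of "3 - a mod 3"] a(2) by (auto simp: m_def)
  let ?c = "\<lambda>r. card (gaps_in_class S r)"
  have "genus S = ?c 0 + ?c (a mod 3) + ?c (3 - a mod 3)"
    by (rule genus_eq_card_gaps_in_class[OF ns a(2)])
  moreover have "?c 0 \<le> 4 * \<gamma>\<^sup>2 + 1"
    using card_gaps_in_class_le[OF S numerical_semigroup_zero[OF ns]] by simp
  moreover have "?c (a mod 3) \<le> (a + 12 * \<gamma>\<^sup>2) div 3 + 1"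
    using card_gaps_in_class_le[OF S a(1)] .
  moreover have "?c (3 - a mod 3) \<le> (m + 12 * \<gamma>\<^sup>2) div 3 + 1"
    using card_gaps_in_class_le[OF S m(1)] by (simp add: m(2))
  ultimately show ?thesis
    unfolding m_def[symmetric] by linarith
qed

lemma card_gaps_in_class_exchange:
  assumes S: "numerical_semigroup S" and T: "numerical_semigroup T" and genus: "genus S = genus T"
    and class0: "gaps_in_class S 0 = gaps_in_class T 0" and i: "i \<in> {1, 2}"
    and sub: "gaps_in_class T i \<subseteq> gaps_in_class S i"
  shows "card (gaps_in_class T (3 - i))
    = card (gaps_in_class S (3 - i)) + card (gaps_in_class S i - gaps_in_class T i)"
proof -
  have "card (gaps_in_class S i - gaps_in_class T i)
      = card (gaps_in_class S i) - card (gaps_in_class T i)"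
    "card (gaps_in_class T i) \<le> card (gaps_in_class S i)"
    using card_Diff_subset[OF finite_gaps_in_class[OF T] sub]
      card_mono[OF finite_gaps_in_class[OF S] sub] by simp_all
  then show ?thesis
    using genus genus_eq_card_gaps_in_class[OF S i] genus_eq_card_gaps_in_class[OF T i]
      arg_cong[OF class0, of card] by linarith
qed

lemma sum_gaps_less_of_gaps_in_class_psubset:
  assumes S: "hyperelliptic3 \<gamma> S" and T: "hyperelliptic3 \<gamma> T" and genus: "genus S = genus T"
    and class0: "gaps_in_class S 0 = gaps_in_class T 0"
    and a: "a \<in> S" "a mod 3 \<in> {1, 2}"
    and psub: "gaps_in_class T (a mod 3) \<subset> gaps_in_class S (a mod 3)"
    and big: "a + 12 * \<gamma>\<^sup>2 + (24 * \<gamma>\<^sup>2 + 2) * (12 * \<gamma>\<^sup>2) < least_in_class S (3 - a mod 3)"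
  shows "\<Sum>(UNIV - S) < \<Sum>(UNIV - T)"
proof -
  have nsS: "numerical_semigroup S" and nsT: "numerical_semigroup T"
    using S T by (simp_all add: hyperelliptic3_imp_numerical_semigroup)
  define i j where "i = a mod 3" and "j = 3 - a mod 3"
  define D P Q where "D = gaps_in_class S i - gaps_in_class T i"
    and "P = gaps_in_class T j" and "Q = gaps_in_class S j"
  have j: "j < 3"
    using a(2) by (auto simp: j_def)
  define m where "m = least_in_class S j"
  have m: "m \<in> S" "m mod 3 = j"
    using least_in_class_mem[OF nsS j] by (simp_all add: m_def)
  have fin: "finite D" "finite P" "finite Q"
    using finite_gaps_in_class nsS nsT by (simp_all add: D_def P_def Q_def)
  have sub: "gaps_in_class T i \<subseteq> gaps_in_class S i"
    using psub by (simp add: i_def)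
  have card: "card P = card Q + card D"
    using card_gaps_in_class_exchange[OF nsS nsT genus class0 a(2)] sub
    by (simp add: D_def P_def Q_def i_def j_def)
  have "D \<noteq> {}"
    using psub by (auto simp: D_def i_def)
  have "card (Q - P) \<le> 24 * \<gamma>\<^sup>2 + 2"
    using card_gaps_in_class_diff_le[OF S T j] card \<open>D \<noteq> {}\<close> fin(1)
    by (simp add: P_def Q_def card_gt_0_iff)
  moreover have "\<forall>x\<in>D. x \<le> a + 12 * \<gamma>\<^sup>2" "\<forall>x\<in>Q. x \<le> m + 12 * \<gamma>\<^sup>2"
    using gaps_in_class_less[OF S a(1)] gaps_in_class_less[OF S m(1)]
    by (fastforce simp: D_def Q_def i_def m(2))+
  moreover have "\<forall>x\<in>P - Q. m \<le> x"
    using least_in_class_le[of _ S] by (auto simp: P_def Q_def gaps_in_class_def m_def)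
  ultimately have "\<Sum>D + \<Sum>Q < \<Sum>P"
    using sum_less_sum_of_card_excess[OF fin card \<open>D \<noteq> {}\<close>] big by (simp add: m_def j_def)
  moreover have "\<Sum>(gaps_in_class S i) = \<Sum>D + \<Sum>(gaps_in_class T i)"
    using sum.subset_diff[OF sub finite_gaps_in_class[OF nsS]] by (simp add: D_def)
  moreover have "\<Sum>(UNIV - S) = \<Sum>(gaps_in_class S 0) + \<Sum>(gaps_in_class S i) + \<Sum>Q"
    "\<Sum>(UNIV - T) = \<Sum>(gaps_in_class T 0) + \<Sum>(gaps_in_class T i) + \<Sum>P"
    using sum_gaps_by_class[OF nsS a(2), of "\<lambda>n. n"] sum_gaps_by_class[OF nsT a(2), of "\<lambda>n. n"]
    by (simp_all add: P_def Q_def i_def j_def)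
  ultimately show ?thesis
    using arg_cong[OF class0, of "\<lambda>A. \<Sum>A"] by linarith
qed

lemma gaps_in_class_psubset_of_Spart_psubset:
  assumes S: "numerical_semigroup S" and T: "numerical_semigroup T"
    and genus: "genus S = genus T" and psub: "Spart S r \<subset> Spart T r"
  shows "gaps_in_class T r \<subset> gaps_in_class S r"
proof -
  have "Spart T r \<subseteq> {n \<in> {1..2 * genus T}. n mod 3 = r}"
    unfolding Spart_def Sstar_def by auto
  with psub show ?thesis
    unfolding gaps_in_class_eq_Spart[OF S] gaps_in_class_eq_Spart[OF T] genus by blast
qed

theorem lemma2p5:
  fixes \<gamma> :: nat
  shows "\<exists>G. \<forall>g\<ge>G. \<forall>S0 u u' S T.
     (\<exists>R\<in>HH g \<gamma>. Spart R 0 = S0) \<longrightarrow>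
     S \<in> Hu g \<gamma> S0 u \<longrightarrow>
     (\<forall>R\<in>Hu g \<gamma> S0 u. card (Spart R (u mod 3)) \<le> card (Spart S (u mod 3))) \<longrightarrow>
     T \<in> Hu g \<gamma> S0 u' \<longrightarrow>
     (\<forall>R\<in>Hu g \<gamma> S0 u'. card (Spart R (u' mod 3)) \<le> card (Spart T (u' mod 3))) \<longrightarrow>
     int u - int (u1H g \<gamma>) < 6 * int \<gamma> \<longrightarrow>
     Spart S (u mod 3) \<subset> Spart T (u' mod 3) \<longrightarrow>
     inflection T < inflection S"
proof -
  define c where "c = 12 * \<gamma>\<^sup>2"
  show ?thesis
  proof (intro exI[of _ "2 * c\<^sup>2 + 6 * c + 10 * \<gamma> + 14"] allI impI)
    fix g S0 u u' S T
    assume g: "2 * c\<^sup>2 + 6 * c + 10 * \<gamma> + 14 \<le> g"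
      and S: "S \<in> Hu g \<gamma> S0 u" and T: "T \<in> Hu g \<gamma> S0 u'"
      and chi: "int u - int (u1H g \<gamma>) < 6 * int \<gamma>"
      and psub: "Spart S (u mod 3) \<subset> Spart T (u' mod 3)"
    have S': "hyperelliptic3 \<gamma> S" "genus S = g" "Spart S 0 = S0" "u1 S = u"
      and T': "hyperelliptic3 \<gamma> T" "genus T = g" "Spart T 0 = S0"
      using S T by (simp_all add: Hu_def HS0_def HH_def)
    have nsS: "numerical_semigroup S" and nsT: "numerical_semigroup T"
      using S'(1) T'(1) by (simp_all add: hyperelliptic3_imp_numerical_semigroup)
    have u: "u \<in> S" "u mod 3 \<in> {1, 2}"
      using u1_mem[OF nsS] S'(4) by auto
    have u_le: "u \<le> g + 5 * \<gamma> + 2"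
      using u1H_plus_gamma_le[of \<gamma> g] g chi by linarith
    then have "u \<in> Spart S (u mod 3)"
      using u S'(2) g by (auto simp: Spart_def Sstar_def Suc_le_eq gr0I)
    then have "u' mod 3 = u mod 3"
      using psub by (auto simp: Spart_def)
    then have "gaps_in_class T (u mod 3) \<subset> gaps_in_class S (u mod 3)"
      using gaps_in_class_psubset_of_Spart_psubset[OF nsS nsT] psub S'(2) T'(2) by simp
    moreover have "gaps_in_class S 0 = gaps_in_class T 0"
      using S'(2,3) T'(2,3) by (simp add: gaps_in_class_eq_Spart[OF nsS] gaps_in_class_eq_Spart[OF nsT])
    moreover have "u + c + (2 * c + 2) * c < least_in_class S (3 - u mod 3)"
      using triple_genus_le_least_in_class[OF S'(1) u] S'(2) g u_le
      by (simp add: c_def power2_eq_square algebra_simps)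
    ultimately have "\<Sum>(UNIV - S) < \<Sum>(UNIV - T)"
      using sum_gaps_less_of_gaps_in_class_psubset[OF S'(1) T'(1) _ _ u] S'(2) T'(2)
      by (simp add: c_def)
    moreover have "inflection S + \<Sum>(UNIV - S) = inflection T + \<Sum>(UNIV - T)"
      using inflection_plus_sum_gaps[OF nsS] inflection_plus_sum_gaps[OF nsT] S'(2) T'(2) by simp
    ultimately show "inflection T < inflection S"
      by linarith
  qed
qed

end
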